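(* Let $A\in\mathbb{R}^{n\times n}$ be symmetric positive definite, $\Pi\in\mathbb{R}^{n\times n}$ symmetric positive definite, and $M_0\in\mathbb{R}^{n\times n}$. For $i\ge0$ let $R_i:=I_n-AM_i$, $Z_i:=\Pi R_i$, $G_i:=-\Pi AZ_i$, and for $i\ge1$ let $M_i$ be the matrix with $$M_i\in M_0+\mathcal{K}_i((\Pi A)^2,G_0)\quad\text{and}\quad R_i\perp\mathcal{K}_i((\Pi A)^2,G_0),$$ where $\mathcal{K}_i((\Pi A)^2,G_0)=\mathrm{span}\{G_0,(\Pi A)^2G_0,\dots,(\Pi A)^{2(i-1)}G_0\}$. Define $P_0:=-G_0$ and, for $i\ge1$, $P_i:=-G_i+\beta_iP_{i-1}$ with $\beta_i=\frac{(R_i,G_i)_F}{(R_{i-1},G_{i-1})_F}$. Then for $i=0,1,\dots$, $$M_{i+1}=M_i+\alpha_iP_i,\qquad \alpha_i=-\frac{(R_i,G_i)_F}{(P_i,AP_i)_F},\qquad R_{i+1}=R_i-\alpha_iAP_i.$$ Furthermore, $P_0,\dots,P_{i-1}$ form an $A$-orthogonal basis (i.e. $(P_j,AP_k)_F=0$ for $j\ne k$) of the Krylov subspace, and $$\mathrm{span}\{P_0,\dots,P_{i-1}\}=\mathrm{span}\{G_0,\dots,G_{i-1}\}=\mathcal{K}_i((\Pi A)^2,G_0).$$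
   Context: The Frobenius inner product is $(X,Y)_F=\operatorname{tr}(X^TY)$, and $\perp$ denotes orthogonality with respect to it. It is assumed that the iteration does not break down (the iterates are uniquely determined and $R_i\neq0$, $P_i\neq0$ for all indices considered). *)

theory Defs
  imports "HOL-Analysis.Analysis"
begin

definition frob :: "real^'n^'n \<Rightarrow> real^'n^'n \<Rightarrow> real" where
  "frob X Y = trace (transpose X ** Y)"

definition spd :: "real^'n^'n \<Rightarrow> bool" where
  "spd A \<longleftrightarrow> transpose A = A \<and> (\<forall>x. x \<noteq> 0 \<longrightarrow> x \<bullet> (A *v x) > 0)"

primrec mpow :: "real^'n^'n \<Rightarrow> nat \<Rightarrow> real^'n^'n" where
  "mpow B 0 = mat 1"
| "mpow B (Suc k) = B ** mpow B k"

definition krylov :: "real^'n^'n \<Rightarrow> real^'n^'n \<Rightarrow> nat \<Rightarrow> (real^'n^'n) set" where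
  "krylov B G i = span {mpow B k ** G | k. k < i}"

definition resid :: "real^'n^'n \<Rightarrow> (nat \<Rightarrow> real^'n^'n) \<Rightarrow> nat \<Rightarrow> real^'n^'n" where
  "resid A M i = mat 1 - A ** M i"

definition zdir :: "real^'n^'n \<Rightarrow> real^'n^'n \<Rightarrow> (nat \<Rightarrow> real^'n^'n) \<Rightarrow> nat \<Rightarrow> real^'n^'n" where
  "zdir A Pc M i = Pc ** resid A M i"

definition gdir :: "real^'n^'n \<Rightarrow> real^'n^'n \<Rightarrow> (nat \<Rightarrow> real^'n^'n) \<Rightarrow> nat \<Rightarrow> real^'n^'n" where
  "gdir A Pc M i = - (Pc ** A ** zdir A Pc M i)"

primrec pdir :: "real^'n^'n \<Rightarrow> real^'n^'n \<Rightarrow> (nat \<Rightarrow> real^'n^'n) \<Rightarrow> nat \<Rightarrow> real^'n^'n" where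
  "pdir A Pc M 0 = - gdir A Pc M 0"
| "pdir A Pc M (Suc i) = - gdir A Pc M (Suc i)
     + (frob (resid A M (Suc i)) (gdir A Pc M (Suc i)) / frob (resid A M i) (gdir A Pc M i))
       *\<^sub>R pdir A Pc M i"

end

theory Submission
  imports Defs
begin

(* With the Frobenius inner product the n x n matrices form a Euclidean space on which
   X \<mapsto> A X is self-adjoint and positive definite, so the Galerkin iterates behave like
   preconditioned conjugate gradients.  Since G j = G 0 + (Pc A)^2 (M j - M 0), each G j lies
   in K (j+1); since R j is orthogonal to K j while (R j, G j) = -(Pc R j, A Pc R j) < 0, it does
   not lie in K j.  Hence the G j, and likewise the P j (as P j + G j lies in K j), span the
   Krylov spaces.  By induction, P j is A-orthogonal to K j: G (j+1) is A-orthogonal to K j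
   because (Pc A)^2 maps K j into K (j+1), which is orthogonal to R (j+1), and beta is exactly
   the coefficient making P (j+1) A-orthogonal to P j.  This A-orthogonality forces
   M (j+1) - M j, an element of K (j+1), to be a multiple of P j, and R (j+1) being orthogonal
   to P j fixes the multiple as alpha j. *)

lemma frob_eq_inner: "frob X Y = X \<bullet> Y"
proof -
  have "frob X Y = (\<Sum>i\<in>UNIV. \<Sum>k\<in>UNIV. X$k$i * Y$k$i)"
    by (simp add: frob_def trace_def matrix_matrix_mult_def transpose_def)
  also have "\<dots> = (\<Sum>k\<in>UNIV. \<Sum>i\<in>UNIV. X$k$i * Y$k$i)"
    by (rule sum.swap)
  finally show ?thesis
    by (simp add: inner_vec_def)
qed

lemma linear_matrix_mult_left: "linear (\<lambda>Y::real^'n^'m. (X::real^'m^'k) ** Y)"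
  by (rule linearI) (simp_all add: matrix_add_ldistrib matrix_scalar_ac scalar_matrix_assoc)

lemma matrix_mult_diff_right: "X ** (Y - Z) = X ** Y - X ** (Z::real^'n^'m)"
  by (rule linear_diff[OF linear_matrix_mult_left])

lemma matrix_mult_scaleR_right: "X ** (c *\<^sub>R Y) = c *\<^sub>R (X ** (Y::real^'n^'m))"
  by (rule linear_scale[OF linear_matrix_mult_left])

lemma inner_matrix_mult_left:
  fixes A X Y :: "real^'n^'n"
  shows "X \<bullet> (A ** Y) = (transpose A ** X) \<bullet> Y"
proof -
  have "X \<bullet> (A ** Y) = trace (transpose X ** (A ** Y))"
    using frob_eq_inner[of X "A ** Y"] by (simp add: frob_def)
  also have "\<dots> = trace (transpose (transpose A ** X) ** Y)"
    by (simp add: matrix_transpose_mul matrix_mul_assoc)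
  finally show ?thesis
    by (simp only: frob_def[symmetric] frob_eq_inner)
qed

lemma inner_matrix_mult_symmetric:
  assumes "transpose A = A"
  shows "X \<bullet> (A ** Y) = Y \<bullet> (A ** (X::real^'n^'n))"
  using inner_matrix_mult_left[of X A Y] assms by (simp add: inner_commute)

lemma spd_inner_matrix_mult_pos:
  assumes "spd A" and "(X::real^'n^'n) \<noteq> 0"
  shows "0 < X \<bullet> (A ** X)"
proof -
  define col where "col i = (\<chi> k. X$k$i)" for i
  have "X \<bullet> (A ** X) = (\<Sum>k\<in>UNIV. \<Sum>i\<in>UNIV. X$k$i * (\<Sum>l\<in>UNIV. A$k$l * X$l$i))"
    by (simp add: inner_vec_def matrix_matrix_mult_def)
  also have "\<dots> = (\<Sum>i\<in>UNIV. \<Sum>k\<in>UNIV. X$k$i * (\<Sum>l\<in>UNIV. A$k$l * X$l$i))"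
    by (rule sum.swap)
  also have "\<dots> = (\<Sum>i\<in>UNIV. col i \<bullet> (A *v col i))"
    by (simp add: inner_vec_def col_def matrix_vector_mult_def)
  finally have columnwise: "X \<bullet> (A ** X) = (\<Sum>i\<in>UNIV. col i \<bullet> (A *v col i))" .
  obtain i where "col i \<noteq> 0"
    using assms(2) by (auto simp: col_def vec_eq_iff)
  then have "0 < col i \<bullet> (A *v col i)"
    using assms(1) by (simp add: spd_def)
  moreover have "0 \<le> col j \<bullet> (A *v col j)" for j
    using assms(1) by (cases "col j = 0") (auto simp: spd_def intro: less_imp_le)
  ultimately show ?thesis
    unfolding columnwise by (intro sum_pos2[of UNIV i]) auto
qed

lemma independent_image_lessThan:
  fixes f :: "nat \<Rightarrow> 'a::real_vector"
  assumes "\<And>j. j < m \<Longrightarrow> f j \<notin> span (f ` {..<j})"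
  shows "independent (f ` {..<m}) \<and> inj_on f {..<m}"
  using assms
proof (induction m)
  case 0
  then show ?case
    by (simp add: independent_empty)
next
  case (Suc m)
  then have IH: "independent (f ` {..<m})" "inj_on f {..<m}"
    and new: "f m \<notin> span (f ` {..<m})"
    by auto
  have "independent (insert (f m) (f ` {..<m}))"
    using independent_insertI[OF new IH(1)] .
  moreover have "inj_on f (insert m {..<m})"
    using IH(2) new span_base[of "f m" "f ` {..<m}"] by auto
  ultimately show ?case
    by (simp add: lessThan_Suc)
qed

lemma span_image_lessThan_eq_nested_subspace:
  fixes f :: "nat \<Rightarrow> 'a::euclidean_space" and K :: "nat \<Rightarrow> 'a set"
  assumes subspace: "\<And>j. subspace (K j)"
    and mono: "\<And>j j'. j \<le> j' \<Longrightarrow> K j \<subseteq> K j'"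
    and dim: "\<And>j. dim (K j) \<le> j"
    and mem: "\<And>j. j < m \<Longrightarrow> f j \<in> K (Suc j)"
    and notin: "\<And>j. j < m \<Longrightarrow> f j \<notin> K j"
    and "j \<le> m"
  shows "span (f ` {..<j}) = K j \<and> independent (f ` {..<j}) \<and> inj_on f {..<j}"
proof -
  have span_sub: "span (f ` {..<j}) \<subseteq> K j" if "j \<le> m" for j
  proof (rule span_minimal[OF image_subsetI subspace])
    fix k
    assume "k \<in> {..<j}"
    then have "f k \<in> K (Suc k)" and "K (Suc k) \<subseteq> K j"
      using mem mono that by auto
    then show "f k \<in> K j"
      by blast
  qed
  have "f k \<notin> span (f ` {..<k})" if "k < j" for k
    using span_sub[of k] notin[of k] that \<open>j \<le> m\<close> by auto
  then have independent: "independent (f ` {..<j}) \<and> inj_on f {..<j}"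
    by (rule independent_image_lessThan)
  then have "dim (span (f ` {..<j})) = j"
    by (simp add: dim_eq_card_independent card_image)
  then have "span (f ` {..<j}) = K j"
    using subspace_dim_equal[OF subspace_span subspace span_sub] dim \<open>j \<le> m\<close> by simp
  with independent show ?thesis
    by simp
qed

lemma subspace_krylov: "subspace (krylov B G j)"
  unfolding krylov_def by (rule subspace_span)

lemma krylov_0 [simp]: "krylov B G 0 = {0}"
  by (simp add: krylov_def)

lemma krylov_mono: "j \<le> j' \<Longrightarrow> krylov B G j \<subseteq> krylov B G j'"
  unfolding krylov_def by (rule span_mono) auto

lemma mpow_mult_mem_krylov: "k < j \<Longrightarrow> mpow B k ** G \<in> krylov B G j"
  unfolding krylov_def by (rule span_base) auto

lemma dim_krylov_le: "dim (krylov B G j) \<le> j"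
proof -
  have "{mpow B k ** G | k. k < j} = (\<lambda>k. mpow B k ** G) ` {..<j}"
    by auto
  then have "dim (krylov B G j) \<le> card ((\<lambda>k. mpow B k ** G) ` {..<j})"
    unfolding krylov_def by (simp add: dim_le_card')
  also have "\<dots> \<le> j"
    using card_image_le[of "{..<j}"] by simp
  finally show ?thesis .
qed

lemma matrix_mult_mem_krylov_Suc:
  assumes "X \<in> krylov B G j"
  shows "B ** X \<in> krylov B G (Suc j)"
proof -
  let ?S = "{mpow B k ** G | k. k < j}"
  have "B ** X \<in> (\<lambda>Y. B ** Y) ` span ?S"
    using assms unfolding krylov_def by auto
  also have "\<dots> = span ((\<lambda>Y. B ** Y) ` ?S)"
    by (rule linear_span_image[OF linear_matrix_mult_left, symmetric])
  also have "\<dots> \<subseteq> krylov B G (Suc j)"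
    unfolding krylov_def
  proof (rule span_mono, clarify)
    fix k assume "k < j"
    then show "\<exists>k'. B ** (mpow B k ** G) = mpow B k' ** G \<and> k' < Suc j"
      by (intro exI[of _ "Suc k"]) (simp add: matrix_mul_assoc)
  qed
  finally show ?thesis .
qed

locale galerkin_pcg =
  fixes A Pc :: "real^'n^'n" and M :: "nat \<Rightarrow> real^'n^'n"
  assumes spd_A: "spd A" and spd_Pc: "spd Pc"
    and iter: "\<And>j. j \<ge> 1 \<Longrightarrow>
        M j \<in> {M 0 + X | X. X \<in> krylov ((Pc ** A) ** (Pc ** A)) (gdir A Pc M 0) j}
      \<and> (\<forall>X \<in> krylov ((Pc ** A) ** (Pc ** A)) (gdir A Pc M 0) j. frob (resid A M j) X = 0)"
begin

abbreviation "B \<equiv> (Pc ** A) ** (Pc ** A)"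
abbreviation "K \<equiv> krylov B (gdir A Pc M 0)"
abbreviation "R \<equiv> resid A M"
abbreviation "G \<equiv> gdir A Pc M"
abbreviation "P \<equiv> pdir A Pc M"
abbreviation "alpha j \<equiv> - (R j \<bullet> G j) / (P j \<bullet> (A ** P j))"
abbreviation "beta j \<equiv> (R (Suc j) \<bullet> G (Suc j)) / (R j \<bullet> G j)"

lemma symmetric_A: "transpose A = A"
  using spd_A by (simp add: spd_def)

lemma symmetric_Pc: "transpose Pc = Pc"
  using spd_Pc by (simp add: spd_def)

lemma iterate_diff_mem_krylov: "M j - M 0 \<in> K j"
  using iter[of j] by (cases "j = 0") (auto simp: span_zero)

lemma resid_orthogonal_krylov: "X \<in> K j \<Longrightarrow> R j \<bullet> X = 0"
  using iter[of j] by (cases "j = 0") (auto simp: frob_eq_inner)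

lemma resid_eq: "R k = R j - A ** (M k - M j)"
  by (simp add: resid_def matrix_mult_diff_right)

lemma resid_Suc_eq:
  assumes "M (Suc j) = M j + c *\<^sub>R P j"
  shows "R (Suc j) = R j - c *\<^sub>R (A ** P j)"
  using resid_eq[of "Suc j" j] unfolding assms by (simp add: matrix_mult_scaleR_right)

lemma gdir_eq: "G j = - ((Pc ** A ** Pc) ** R j)"
  by (simp add: gdir_def zdir_def matrix_mul_assoc)

lemma gdir_eq_initial: "G j = G 0 + B ** (M j - M 0)"
  unfolding gdir_eq resid_eq[of j 0] by (simp add: matrix_mult_diff_right matrix_mul_assoc)

lemma gdir_mem_krylov_Suc: "G j \<in> K (Suc j)"
proof -
  have "G 0 \<in> K (Suc j)"
    using mpow_mult_mem_krylov[of 0 "Suc j" B "G 0"] by simp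
  moreover have "B ** (M j - M 0) \<in> K (Suc j)"
    by (rule matrix_mult_mem_krylov_Suc[OF iterate_diff_mem_krylov])
  ultimately show ?thesis
    by (subst gdir_eq_initial) (rule subspace_add[OF subspace_krylov])
qed

lemma symmetric_PcAPc: "transpose (Pc ** A ** Pc) = Pc ** A ** Pc"
  by (simp add: matrix_transpose_mul symmetric_A symmetric_Pc matrix_mul_assoc)

lemma inner_gdir_left: "G j \<bullet> Y = - (R j \<bullet> ((Pc ** A ** Pc) ** Y))"
proof -
  have "G j \<bullet> Y = - (Y \<bullet> ((Pc ** A ** Pc) ** R j))"
    by (simp add: gdir_eq inner_commute[of _ Y])
  also have "\<dots> = - (R j \<bullet> ((Pc ** A ** Pc) ** Y))"
    by (simp add: inner_matrix_mult_symmetric[OF symmetric_PcAPc])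
  finally show ?thesis .
qed

lemma resid_inner_gdir_commute: "R k \<bullet> G j = R j \<bullet> G k"
proof -
  have "R k \<bullet> G j = - (R j \<bullet> ((Pc ** A ** Pc) ** R k))"
    by (simp add: inner_commute[of "R k"] inner_gdir_left)
  also have "\<dots> = - (R k \<bullet> ((Pc ** A ** Pc) ** R j))"
    by (simp add: inner_matrix_mult_symmetric[OF symmetric_PcAPc])
  also have "\<dots> = R j \<bullet> G k"
    by (simp add: inner_commute[of "R j"] inner_gdir_left)
  finally show ?thesis .
qed

lemma resid_inner_gdir_neg:
  assumes "R j \<noteq> 0"
  shows "R j \<bullet> G j < 0"
proof -
  have "Pc ** R j \<noteq> 0"
    using spd_inner_matrix_mult_pos[OF spd_Pc assms] by auto
  then have "0 < (Pc ** R j) \<bullet> (A ** (Pc ** R j))"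
    by (rule spd_inner_matrix_mult_pos[OF spd_A])
  also have "\<dots> = R j \<bullet> (Pc ** (A ** (Pc ** R j)))"
    by (subst inner_matrix_mult_left) (simp add: symmetric_Pc)
  also have "\<dots> = - (R j \<bullet> G j)"
    by (simp add: gdir_eq matrix_mul_assoc)
  finally show ?thesis
    by simp
qed

lemma gdir_notin_krylov:
  assumes "R j \<noteq> 0"
  shows "G j \<notin> K j"
proof
  assume "G j \<in> K j"
  then have "R j \<bullet> G j = 0"
    by (rule resid_orthogonal_krylov)
  with resid_inner_gdir_neg[OF assms] show False
    by simp
qed

lemma gdir_Suc_A_orthogonal_krylov:
  assumes "X \<in> K j"
  shows "X \<bullet> (A ** G (Suc j)) = 0"
proof -
  have "X \<bullet> (A ** G (Suc j)) = G (Suc j) \<bullet> (A ** X)"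
    by (rule inner_matrix_mult_symmetric[OF symmetric_A])
  also have "\<dots> = - (R (Suc j) \<bullet> (B ** X))"
    by (simp add: inner_gdir_left matrix_mul_assoc)
  also have "\<dots> = 0"
    using resid_orthogonal_krylov[OF matrix_mult_mem_krylov_Suc[OF assms]] by simp
  finally show ?thesis .
qed

lemma mem_krylov_Suc_if_plus_gdir: "X + G j \<in> K j \<Longrightarrow> X \<in> K (Suc j)"
  using subspace_diff[OF subspace_krylov _ gdir_mem_krylov_Suc, of "X + G j" j] krylov_mono[of j "Suc j"]
  by auto

lemma pdir_plus_gdir_mem_krylov: "P j + G j \<in> K j"
proof (induction j)
  case 0
  then show ?case
    by simp
next
  case (Suc j)
  then have "P j \<in> K (Suc j)"
    by (rule mem_krylov_Suc_if_plus_gdir)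
  then show ?case
    by (simp add: subspace_scale[OF subspace_krylov])
qed

lemma pdir_mem_krylov_Suc: "P j \<in> K (Suc j)"
  by (rule mem_krylov_Suc_if_plus_gdir[OF pdir_plus_gdir_mem_krylov])

lemma resid_inner_pdir: "R j \<bullet> P j = - (R j \<bullet> G j)"
  using resid_orthogonal_krylov[OF pdir_plus_gdir_mem_krylov, of j]
  by (simp add: inner_add_right)

end

(* Only R j \<noteq> 0 is assumed: P j \<noteq> 0 then follows, see pdir_notin_krylov. *)
locale galerkin_pcg_no_breakdown = galerkin_pcg +
  fixes i :: nat
  assumes resid_nonzero: "j \<le> i \<Longrightarrow> R j \<noteq> 0"
begin

lemma span_gdir: "j \<le> Suc i \<Longrightarrow> span (G ` {..<j}) = K j"
  using span_image_lessThan_eq_nested_subspace[of K "Suc i" G j, OF subspace_krylov krylov_mono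
      dim_krylov_le gdir_mem_krylov_Suc gdir_notin_krylov] resid_nonzero
  by auto

lemma pdir_notin_krylov:
  assumes "j \<le> i"
  shows "P j \<notin> K j"
proof
  assume "P j \<in> K j"
  with pdir_plus_gdir_mem_krylov have "(P j + G j) - P j \<in> K j"
    by (rule subspace_diff[OF subspace_krylov])
  with gdir_notin_krylov[OF resid_nonzero[OF assms]] show False
    by simp
qed

lemma pdir_energy_pos:
  assumes "j \<le> i"
  shows "0 < P j \<bullet> (A ** P j)"
proof (rule spd_inner_matrix_mult_pos[OF spd_A])
  show "P j \<noteq> 0"
    using pdir_notin_krylov[OF assms] subspace_0[OF subspace_krylov, of B "G 0" j] by auto
qed

lemma krylov_Suc_decomp:
  assumes "j \<le> i" and "X \<in> K (Suc j)"
  obtains c k where "k \<in> K j" and "X = c *\<^sub>R P j + k"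
proof -
  have "X \<in> span (insert (G j) (G ` {..<j}))"
    using span_gdir[of "Suc j"] assms by (simp add: lessThan_Suc)
  then obtain c where "X - c *\<^sub>R G j \<in> span (G ` {..<j})"
    unfolding span_insert by blast
  then have "X - c *\<^sub>R G j \<in> K j"
    using span_gdir[of j] assms(1) by simp
  then have "X - c *\<^sub>R G j + c *\<^sub>R (P j + G j) \<in> K j"
    by (rule subspace_add[OF subspace_krylov _ subspace_scale[OF subspace_krylov pdir_plus_gdir_mem_krylov]])
  moreover have "X = (- c) *\<^sub>R P j + (X - c *\<^sub>R G j + c *\<^sub>R (P j + G j))"
    by (simp add: algebra_simps)
  ultimately show ?thesis
    by (rule that)
qed

lemma iterate_Suc_eq_if_A_orthogonal:
  assumes "j \<le> i" and A_orthogonal: "\<And>X. X \<in> K j \<Longrightarrow> X \<bullet> (A ** P j) = 0"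
  shows "M (Suc j) = M j + alpha j *\<^sub>R P j"
proof -
  have "M (Suc j) - M j = (M (Suc j) - M 0) - (M j - M 0)"
    by simp
  also have "\<dots> \<in> K (Suc j)"
    using iterate_diff_mem_krylov[of j] krylov_mono[of j "Suc j"]
    by (intro subspace_diff[OF subspace_krylov iterate_diff_mem_krylov]) auto
  finally obtain c k where k: "k \<in> K j" and step: "M (Suc j) - M j = c *\<^sub>R P j + k"
    using krylov_Suc_decomp[OF assms(1)] by blast
  \<comment> \<open>The Galerkin conditions at steps j and Suc j make k A-orthogonal to itself.\<close>
  have "k \<bullet> (A ** k) = k \<bullet> (A ** (M (Suc j) - M j))"
    using A_orthogonal[OF k]
    by (simp add: step matrix_add_ldistrib matrix_mult_scaleR_right inner_add_right)
  also have "\<dots> = k \<bullet> (R j - R (Suc j))"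
    using resid_eq[of "Suc j" j] by simp
  also have "\<dots> = 0"
    using resid_orthogonal_krylov[OF k] resid_orthogonal_krylov[of k "Suc j"] k krylov_mono[of j "Suc j"]
    by (auto simp: inner_diff_right inner_commute)
  finally have "k = 0"
    using spd_inner_matrix_mult_pos[OF spd_A, of k] by fastforce
  then have update: "M (Suc j) = M j + c *\<^sub>R P j"
    using step by (simp add: algebra_simps)
  have "0 = P j \<bullet> R (Suc j)"
    using resid_orthogonal_krylov[OF pdir_mem_krylov_Suc] by (simp add: inner_commute)
  also have "\<dots> = - (R j \<bullet> G j) - c * (P j \<bullet> (A ** P j))"
    using resid_inner_pdir[of j] by (simp add: resid_Suc_eq[OF update] inner_diff_right inner_commute)
  finally have "c = alpha j"
    using pdir_energy_pos[OF assms(1)] by (simp add: field_simps)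
  with update show ?thesis
    by simp
qed

lemma pdir_Suc_A_orthogonal_pdir:
  assumes "Suc j \<le> i" and update: "M (Suc j) = M j + alpha j *\<^sub>R P j"
  shows "P j \<bullet> (A ** P (Suc j)) = 0"
proof -
  have RG_neg: "R j \<bullet> G j < 0"
    using resid_inner_gdir_neg resid_nonzero assms(1) by simp
  have "G (Suc j) \<bullet> R j = R (Suc j) \<bullet> G j"
    using resid_inner_gdir_commute[of j "Suc j"] by (simp only: inner_commute)
  also have "\<dots> = 0"
    by (rule resid_orthogonal_krylov[OF gdir_mem_krylov_Suc])
  finally have "P (Suc j) \<bullet> R j = beta j * (P j \<bullet> R j)"
    by (simp add: frob_eq_inner inner_diff_left)
  also have "\<dots> = beta j * - (R j \<bullet> G j)"
    using resid_inner_pdir[of j] by (simp only: inner_commute)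
  also have "\<dots> = - (R (Suc j) \<bullet> G (Suc j))"
    using RG_neg by simp
  also have "\<dots> = P (Suc j) \<bullet> R (Suc j)"
    using resid_inner_pdir[of "Suc j"] by (simp only: inner_commute)
  finally have same_resid_inner: "P (Suc j) \<bullet> R j = P (Suc j) \<bullet> R (Suc j)" .
  have "alpha j * (P j \<bullet> (A ** P (Suc j))) = P (Suc j) \<bullet> (alpha j *\<^sub>R (A ** P j))"
    by (simp only: inner_scaleR_right inner_matrix_mult_symmetric[OF symmetric_A, of "P j" "P (Suc j)"])
  also have "\<dots> = P (Suc j) \<bullet> (R j - R (Suc j))"
    by (simp add: resid_Suc_eq[OF update])
  also have "\<dots> = 0"
    using same_resid_inner by (simp only: inner_diff_right diff_self)
  finally have "alpha j * (P j \<bullet> (A ** P (Suc j))) = 0" .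
  moreover have "alpha j \<noteq> 0"
    using RG_neg pdir_energy_pos[of j] assms(1) by simp
  ultimately show ?thesis
    by simp
qed

lemma pdir_A_orthogonal_krylov: "j \<le> i \<Longrightarrow> X \<in> K j \<Longrightarrow> X \<bullet> (A ** P j) = 0"
proof (induction j arbitrary: X)
  case 0
  then show ?case
    by simp
next
  case (Suc j)
  then have update: "M (Suc j) = M j + alpha j *\<^sub>R P j"
    by (intro iterate_Suc_eq_if_A_orthogonal) auto
  obtain c k where k: "k \<in> K j" and X: "X = c *\<^sub>R P j + k"
    using krylov_Suc_decomp Suc.prems by (metis Suc_leD)
  have "k \<bullet> (A ** P (Suc j)) = 0"
    using gdir_Suc_A_orthogonal_krylov[OF k] Suc.IH[OF _ k] Suc.prems
    by (simp add: frob_eq_inner matrix_mult_diff_right matrix_mult_scaleR_right inner_diff_right)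
  then show ?case
    using pdir_Suc_A_orthogonal_pdir[OF Suc.prems(1) update] by (simp add: X inner_add_left)
qed

lemma iterate_Suc_eq: "j \<le> i \<Longrightarrow> M (Suc j) = M j + alpha j *\<^sub>R P j"
  using iterate_Suc_eq_if_A_orthogonal pdir_A_orthogonal_krylov by blast

lemma pdir_A_orthogonal:
  assumes "j \<le> i" and "k \<le> i" and "j \<noteq> k"
  shows "P j \<bullet> (A ** P k) = 0"
proof (cases "j < k")
  case True
  then have "P j \<in> K k"
    using pdir_mem_krylov_Suc[of j] krylov_mono[of "Suc j" k] by auto
  then show ?thesis
    using pdir_A_orthogonal_krylov assms(2) by blast
next
  case False
  then have "P k \<in> K j"
    using pdir_mem_krylov_Suc[of k] krylov_mono[of "Suc k" j] assms(3) by auto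
  then show ?thesis
    using pdir_A_orthogonal_krylov assms(1) inner_matrix_mult_symmetric[OF symmetric_A] by metis
qed

lemma span_pdir:
  "j \<le> Suc i \<Longrightarrow> span (P ` {..<j}) = K j \<and> independent (P ` {..<j}) \<and> inj_on P {..<j}"
  using span_image_lessThan_eq_nested_subspace[of K "Suc i" P j, OF subspace_krylov krylov_mono
      dim_krylov_le pdir_mem_krylov_Suc pdir_notin_krylov]
  by simp

end

theorem proposition10:
  fixes A Pc :: "real^'n^'n" and M :: "nat \<Rightarrow> real^'n^'n" and i :: nat
  assumes "spd A" and "spd Pc"
    and iter: "\<And>j. j \<ge> 1 \<Longrightarrow>
        M j \<in> {M 0 + X | X. X \<in> krylov ((Pc ** A) ** (Pc ** A)) (gdir A Pc M 0) j}
      \<and> (\<forall>X \<in> krylov ((Pc ** A) ** (Pc ** A)) (gdir A Pc M 0) j. frob (resid A M j) X = 0)"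
    and nobreak: "\<And>j. j \<le> i \<Longrightarrow> resid A M j \<noteq> 0 \<and> pdir A Pc M j \<noteq> 0"
  shows "(let \<alpha> = - frob (resid A M i) (gdir A Pc M i) / frob (pdir A Pc M i) (A ** pdir A Pc M i)
          in M (Suc i) = M i + \<alpha> *\<^sub>R pdir A Pc M i
           \<and> resid A M (Suc i) = resid A M i - \<alpha> *\<^sub>R (A ** pdir A Pc M i))
    \<and> (\<forall>j<i. \<forall>k<i. j \<noteq> k \<longrightarrow> frob (pdir A Pc M j) (A ** pdir A Pc M k) = 0)
    \<and> inj_on (pdir A Pc M) {..<i} \<and> independent (pdir A Pc M ` {..<i})
    \<and> span (pdir A Pc M ` {..<i}) = span (gdir A Pc M ` {..<i})
    \<and> span (gdir A Pc M ` {..<i}) = krylov ((Pc ** A) ** (Pc ** A)) (gdir A Pc M 0) i"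
proof -
  interpret galerkin_pcg_no_breakdown A Pc M i
    using assms by unfold_locales auto
  have update: "M (Suc i) = M i + alpha i *\<^sub>R P i"
    by (rule iterate_Suc_eq) simp
  then have "R (Suc i) = R i - alpha i *\<^sub>R (A ** P i)"
    by (rule resid_Suc_eq)
  moreover have "\<forall>j<i. \<forall>k<i. j \<noteq> k \<longrightarrow> P j \<bullet> (A ** P k) = 0"
    using pdir_A_orthogonal by simp
  moreover have "span (P ` {..<i}) = K i \<and> independent (P ` {..<i}) \<and> inj_on P {..<i}"
    by (rule span_pdir) simp
  moreover have "span (G ` {..<i}) = K i"
    by (rule span_gdir) simp
  ultimately show ?thesis
    using update by (simp add: Let_def frob_eq_inner)
qed

end
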